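(* Let $i\ge 3$ and $k\ge 3$ be integers. Then: (a) $g_3(F_i,F_{i+2},F_{i+k})=(4F_i-1)F_{i+2}-F_i$ whenever $k\ge i+3$; (b) $g_3(F_i,F_{i+2},F_{2i+2})=(F_i-1)F_{i+2}+F_{2i+2}-F_i$; (c) $g_3(F_i,F_{i+2},F_{2i+1})=(F_i+F_{i-2}-1)F_{i+2}+F_{2i+1}-F_i$; (d) $g_3(F_i,F_{i+2},F_{2i})=(F_i-1)F_{i+2}+2F_{2i}-F_i$; (e) $g_3(F_i,F_{i+2},F_{2i-1})=(F_{i-2}-1)F_{i+2}+3F_{2i-1}-F_i$ for $i\ge 4$; (f) $g_3(F_i,F_{i+2},F_{2i-2})=(F_{i-5}-1)F_{i+2}+5F_{2i-2}-F_i$ for $i\ge 6$, and $g_3(F_5,F_7,F_8)=F_7+4F_8-F_5=92$; (g) if $r=\lfloor (F_i-1)/F_k\rfloor\ge 3$ (equivalently $k\le i-3$), then $$g_3(F_i,F_{i+2},F_{i+k})=\begin{cases}(F_i-rF_k-1)F_{i+2}+(r+3)F_{i+k}-F_i & \text{if } (F_i-rF_k)F_{i+2}\ge F_{k-2}F_i,\\ (F_k-1)F_{i+2}+(r+2)F_{i+k}-F_i & \text{if } (F_i-rF_k)F_{i+2}< F_{k-2}F_i.\end{cases}$$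
   Context: Fibonacci numbers: $F_0=0$, $F_1=1$, $F_n=F_{n-1}+F_{n-2}$. For positive integers $a_1,\dots,a_l$ with $\gcd(a_1,\dots,a_l)=1$ and an integer $n$, let $d(n;a_1,\dots,a_l)$ be the number of tuples $(x_1,\dots,x_l)$ of nonnegative integers with $a_1x_1+\dots+a_lx_l=n$. For a nonnegative integer $p$, the $p$-Frobenius number $g_p(a_1,\dots,a_l)$ is the largest integer $n$ with $d(n;a_1,\dots,a_l)\le p$. *)

theory Defs
  imports "HOL-Number_Theory.Fib"
begin

definition num_repr :: "int \<Rightarrow> nat list \<Rightarrow> nat" where
  "num_repr n as = card {xs :: nat list. length xs = length as \<and>
      int (\<Sum>j<length as. as ! j * xs ! j) = n}"

definition p_frobenius :: "nat \<Rightarrow> nat list \<Rightarrow> int" where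
  "p_frobenius p as = (GREATEST n :: int. num_repr n as \<le> p)"

abbreviation F :: "nat \<Rightarrow> int" where
  "F n \<equiv> int (fib n)"

end

theory Submission
  imports Defs "HOL-Number_Theory.Cong"
begin

text \<open>Write \<open>a = F i\<close>, \<open>b = F (i + 2)\<close>, \<open>p = F k\<close>, \<open>q = F (k - 2)\<close>; then
  \<open>c = F (i + k) = b p - q a\<close>. For \<open>b s \<equiv> n (mod a)\<close> the representations of \<open>n\<close> by \<open>a, b, c\<close>
  correspond bijectively to the lattice points \<open>(j, z)\<close> with \<open>p z \<le> s + j a\<close> and
  \<open>b s + a (j b - q z) \<le> n\<close>. Hence \<open>g\<^sub>3 = G\<close> as soon as the class of \<open>G\<close> contains at most
  three points of value at most \<open>G\<close>, while every class contains four points of value at most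
  \<open>G + a\<close>. In each case of the theorem the four points are exhibited explicitly, and further
  points below \<open>G\<close> are excluded by eliminating \<open>z\<close> between the two constraints.\<close>

section \<open>Representations as lattice points\<close>

definition representations :: "nat \<Rightarrow> nat \<Rightarrow> nat \<Rightarrow> int \<Rightarrow> (nat \<times> nat \<times> nat) set" where
  "representations a b c n = {(x, y, z). int (a*x + b*y + c*z) = n}"

lemma num_repr_three: "num_repr n [a, b, c] = card (representations a b c n)"
proof -
  let ?tuples = "{xs :: nat list. length xs = length [a, b, c] \<and>
      int (\<Sum>j<length [a, b, c]. [a, b, c] ! j * xs ! j) = n}"
  have "?tuples = (\<lambda>(x, y, z). [x, y, z]) ` representations a b c n"
  proof (intro set_eqI iffI)
    fix xs assume xs: "xs \<in> ?tuples"
    then have "xs = [xs!0, xs!1, xs!2]"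
      by (intro nth_equalityI) (auto simp: less_Suc_eq numeral_3_eq_3 numeral_2_eq_2)
    then obtain x y z where "xs = [x, y, z]" by blast
    with xs show "xs \<in> (\<lambda>(x, y, z). [x, y, z]) ` representations a b c n"
      unfolding representations_def by (force simp: numeral_3_eq_3 lessThan_Suc)
  qed (auto simp: representations_def numeral_3_eq_3 lessThan_Suc add.assoc)
  moreover have "inj_on (\<lambda>(x, y, z). [x, y, z]) (representations a b c n)"
    by (auto simp: inj_on_def)
  ultimately show ?thesis
    unfolding num_repr_def by (simp add: card_image)
qed

lemma finite_representations:
  assumes "0 < a" "0 < b" "0 < c"
  shows "finite (representations a b c n)"
proof (rule finite_subset)
  show "representations a b c n \<subseteq> {0..nat n} \<times> {0..nat n} \<times> {0..nat n}"
  proof safe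
    fix x y z assume "(x, y, z) \<in> representations a b c n"
    then have "int (a*x + b*y + c*z) = n" by (simp add: representations_def)
    then have "nat n = a*x + b*y + c*z" by (metis nat_int)
    moreover have "x \<le> a*x" "y \<le> b*y" "z \<le> c*z" using assms by auto
    ultimately have "x \<le> nat n" "y \<le> nat n" "z \<le> nat n" by linarith+
    then show "x \<in> {0..nat n}" "y \<in> {0..nat n}" "z \<in> {0..nat n}" by auto
  qed
qed simp

text \<open>The point \<open>(j, z)\<close> stands for the representation with \<open>y = s + j a - p z\<close> and
  \<open>a x = n - (b s + a (j b - q z))\<close>.\<close>

definition lattice_points :: "int \<Rightarrow> int \<Rightarrow> int \<Rightarrow> int \<Rightarrow> int \<Rightarrow> int \<Rightarrow> (int \<times> int) set" where
  "lattice_points a b p q s n =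
     {(j, z). 0 \<le> j \<and> 0 \<le> z \<and> p*z \<le> s + j*a \<and> b*s + a*(j*b - q*z) \<le> n}"

lemma mem_lattice_points [simp]:
  "(j, z) \<in> lattice_points a b p q s n \<longleftrightarrow>
     0 \<le> j \<and> 0 \<le> z \<and> p*z \<le> s + j*a \<and> b*s + a*(j*b - q*z) \<le> n"
  by (simp add: lattice_points_def)

lemma dvd_diff_lattice_value:
  fixes a b j n q s z :: int
  assumes "a dvd n - b*s"
  shows "a dvd n - (b*s + a*(j*b - q*z))"
proof -
  have "n - (b*s + a*(j*b - q*z)) = (n - b*s) - a*(j*b - q*z)"
    by (simp add: algebra_simps)
  then show ?thesis
    using assms by (metis dvd_diff dvd_triv_left)
qed

lemma nonneg_if_mult_greater_neg:
  fixes a m :: int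
  assumes "0 < a" "- a < a * m"
  shows "0 \<le> m"
proof (rule ccontr)
  assume "\<not> 0 \<le> m"
  then have "a * m \<le> a * (- 1)" using assms(1) by (intro mult_left_mono) auto
  then show False using assms(2) by simp
qed

lemma bij_betw_representations_lattice_points:
  fixes a b c p q :: nat and s n :: int
  assumes "0 < a" "coprime a b" and c: "int c = int b * int p - int q * int a"
    and s: "0 \<le> s" "s < int a" "int a dvd n - int b * s"
  shows "bij_betw (\<lambda>(x, y, z). ((int y + int p * int z - s) div int a, int z))
           (representations a b c n) (lattice_points a b p q s n)"
proof -
  define g where "g = (\<lambda>(j :: int, z :: int).
      (nat ((n - (int b * s + int a * (j * int b - int q * z))) div int a),
       nat (s + j * int a - int p * z), nat z))"
  have shift: "int a dvd int y + int p * int z - s"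
    if "(x, y, z) \<in> representations a b c n" for x y z
  proof -
    have "int b * (int y + int p * int z - s) = (n - int b * s) + int a * (int q * int z - int x)"
      using that c by (simp add: representations_def algebra_simps)
    then have "int a dvd int b * (int y + int p * int z - s)"
      using s(3) by simp
    then show ?thesis
      using \<open>coprime a b\<close> by (simp add: coprime_dvd_mult_right_iff)
  qed
  have level: "int b * (s + j * int a - int p * z) + int c * z = int b * s + int a * (j * int b - int q * z)"
    for j z by (simp add: c algebra_simps)
  have f_mem: "((int y + int p * int z - s) div int a, int z) \<in> lattice_points a b p q s n
      \<and> g ((int y + int p * int z - s) div int a, int z) = (x, y, z)"
    if xyz: "(x, y, z) \<in> representations a b c n" for x y z
  proof -
    obtain j where j: "int y + int p * int z - s = int a * j"
      using shift[OF xyz] by blast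
    have "0 \<le> int y + int p * int z" by simp
    then have "- int a < int a * j"
      using j s(2) by linarith
    then have "0 \<le> j"
      using nonneg_if_mult_greater_neg[of "int a" j] \<open>0 < a\<close> by simp
    have y: "int y = s + j * int a - int p * int z"
      using j by (simp add: algebra_simps)
    have n: "n - (int b * s + int a * (j * int b - int q * int z)) = int a * int x"
      using xyz level[of j "int z"] unfolding y[symmetric] by (simp add: representations_def)
    have "(int y + int p * int z - s) div int a = j"
      using j \<open>0 < a\<close> by simp
    moreover have "int b * s + int a * (j * int b - int q * int z) \<le> n"
      using n zero_le_mult_iff[of "int a" "int x"] by linarith
    moreover have "nat (s + j * int a - int p * int z) = y"
      using y by (metis nat_int)
    ultimately show ?thesis
      using \<open>0 \<le> j\<close> y n \<open>0 < a\<close> by (simp add: g_def)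
  qed
  have g_mem: "g (j, z) \<in> representations a b c n
      \<and> (\<lambda>(x, y, z). ((int y + int p * int z - s) div int a, int z)) (g (j, z)) = (j, z)"
    if jz: "(j, z) \<in> lattice_points a b p q s n" for j z
  proof -
    have "int a dvd n - (int b * s + int a * (j * int b - int q * z))"
      using s(3) by (rule dvd_diff_lattice_value)
    then obtain x where x: "n - (int b * s + int a * (j * int b - int q * z)) = int a * x"
      by blast
    have "0 \<le> int a * x"
      using x jz by simp
    then have "0 \<le> x"
      using \<open>0 < a\<close> by (simp add: zero_le_mult_iff)
    have "(int (nat (s + j * int a - int p * z)) + int p * z - s) div int a = j"
      using jz \<open>0 < a\<close> by simp
    then show ?thesis
      using jz x \<open>0 \<le> x\<close> level[of j z] \<open>0 < a\<close>
      by (simp add: g_def representations_def algebra_simps)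
  qed
  show ?thesis
    by (rule bij_betw_byWitness[where f' = g]) (use f_mem g_mem in fastforce)+
qed

lemma card_representations_eq_lattice_points:
  fixes a b c p q :: nat and s n :: int
  assumes "0 < a" "0 < b" "0 < c" "coprime a b" "int c = int b * int p - int q * int a"
    and "0 \<le> s" "s < int a" "int a dvd n - int b * s"
  shows "card (representations a b c n) = card (lattice_points a b p q s n)"
    and "finite (lattice_points a b p q s n)"
proof -
  note bij = bij_betw_representations_lattice_points[OF assms(1,4,5,6-8)]
  show "card (representations a b c n) = card (lattice_points a b p q s n)"
    using bij by (rule bij_betw_same_card)
  show "finite (lattice_points a b p q s n)"
    using bij_betw_finite[OF bij] finite_representations[OF assms(1-3)] by simp
qed

lemma residue_exists:
  fixes a b :: int
  assumes "0 < a" "coprime a b"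
  obtains s where "0 \<le> s" "s < a" "a dvd n - b * s"
proof -
  obtain u where "[b * u = 1] (mod a)"
    using cong_solve_coprime_int[of b a] assms by (auto simp: coprime_commute)
  then have "[b * (u * n) = n] (mod a)"
    using cong_scalar_right[of "b * u" 1 a n] by (simp add: mult.assoc)
  then have "[b * ((u * n) mod a) = n] (mod a)"
    by (metis cong_def mod_mult_right_eq)
  then show ?thesis
    using assms by (intro that[of "(u * n) mod a"]) (auto simp: cong_iff_dvd_diff dvd_diff_commute)
qed

text \<open>All values \<open>b s + a (j b - q z)\<close> lie in the residue class of \<open>b s\<close> modulo \<open>a\<close>; so in the
  class of some \<open>n > G\<close>, a value at most \<open>G + a\<close> is at most \<open>n\<close>.\<close>

lemma lattice_points_subset:
  fixes a b p q s n G :: int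
  assumes "0 < a" "G < n" "a dvd n - b * s"
  shows "lattice_points a b p q s (G + a) \<subseteq> lattice_points a b p q s n"
proof clarsimp
  fix j z assume "b*s + a*(j*b - q*z) \<le> G + a"
  moreover have "a dvd n - (b*s + a*(j*b - q*z))"
    using assms(3) by (rule dvd_diff_lattice_value)
  then obtain m where "n - (b*s + a*(j*b - q*z)) = a * m" ..
  moreover have "0 \<le> m"
    using calculation assms(1,2) by (intro nonneg_if_mult_greater_neg[of a]) auto
  ultimately show "b*s + a*(j*b - q*z) \<le> n"
    using assms(1) by (metis diff_ge_0_iff_ge zero_le_mult_iff less_le)
qed

definition at_least_four_points :: "int \<Rightarrow> int \<Rightarrow> int \<Rightarrow> int \<Rightarrow> int \<Rightarrow> bool" where
  "at_least_four_points a b p q G \<longleftrightarrow>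
     (\<forall>s. 0 \<le> s \<longrightarrow> s < a \<longrightarrow> (\<exists>T \<subseteq> lattice_points a b p q s (G + a). card T = 4))"

definition at_most_three_points :: "int \<Rightarrow> int \<Rightarrow> int \<Rightarrow> int \<Rightarrow> int \<Rightarrow> int \<Rightarrow> bool" where
  "at_most_three_points a b p q G s \<longleftrightarrow>
     0 \<le> s \<and> s < a \<and> a dvd G - b * s \<and> (\<exists>u v w. lattice_points a b p q s G \<subseteq> {u, v, w})"

lemma p_frobenius_3_eqI:
  fixes a b c p q :: nat and G s :: int
  assumes pos: "0 < a" "0 < b" "0 < c" and "coprime a b"
    and c: "int c = int b * int p - int q * int a"
    and four: "at_least_four_points a b p q G"
    and three: "at_most_three_points a b p q G s"
  shows "p_frobenius 3 [a, b, c] = G"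
  unfolding p_frobenius_def
proof (rule Greatest_equality)
  note card_eq = card_representations_eq_lattice_points[OF pos \<open>coprime a b\<close> c]
  obtain u v w where "lattice_points a b p q s G \<subseteq> {u, v, w}" and s: "0 \<le> s" "s < a" "a dvd G - b * s"
    using three unfolding at_most_three_points_def by blast
  then have "card (lattice_points a b p q s G) \<le> card {u, v, w}"
    by (intro card_mono) auto
  also have "\<dots> \<le> 3"
    by (simp add: card_insert_if)
  finally show "num_repr G [a, b, c] \<le> 3"
    using card_eq(1)[OF s] by (simp add: num_repr_three)
  fix n assume "num_repr n [a, b, c] \<le> 3"
  show "n \<le> G"
  proof (rule ccontr)
    assume "\<not> n \<le> G"
    have "0 < int a" "coprime (int a) (int b)"
      using pos \<open>coprime a b\<close> by simp_all
    then obtain s' :: int where s': "0 \<le> s'" "s' < a" "a dvd n - b * s'"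
      by (rule residue_exists[where n = n])
    obtain T where T: "T \<subseteq> lattice_points a b p q s' (G + a)" "card T = 4"
      using four s' unfolding at_least_four_points_def by blast
    moreover have "lattice_points a b p q s' (G + a) \<subseteq> lattice_points a b p q s' n"
      using lattice_points_subset[of a G n b s' p q] s' pos \<open>\<not> n \<le> G\<close> by simp
    ultimately have "T \<subseteq> lattice_points a b p q s' n" by blast
    then have "4 \<le> card (lattice_points a b p q s' n)"
      using card_mono[OF card_eq(2)[OF s']] T(2) by metis
    then show False
      using card_eq(1)[OF s'] \<open>num_repr n [a, b, c] \<le> 3\<close> by (simp add: num_repr_three)
  qed
qed

lemma at_most_three_pointsI:
  assumes "0 \<le> s" "s < a" "a dvd G - b * s"
    and "\<And>j z. 0 \<le> j \<Longrightarrow> 0 \<le> z \<Longrightarrow> p*z \<le> s + j*a \<Longrightarrow> b*s + a*(j*b - q*z) \<le> G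
           \<Longrightarrow> (j, z) \<in> {u, v, w}"
  shows "at_most_three_points a b p q G s"
  unfolding at_most_three_points_def
  using assms by (intro conjI exI[of _ u] exI[of _ v] exI[of _ w]) (auto simp: lattice_points_def)

lemma card_four_subsetI:
  assumes "distinct [u, v, w, x]" "u \<in> L" "v \<in> L" "w \<in> L" "x \<in> L"
  shows "\<exists>T \<subseteq> L. card T = 4"
  using assms by (intro exI[of _ "{u, v, w, x}"]) auto

lemma mem_lattice_pointsI:
  "0 \<le> j \<Longrightarrow> 0 \<le> z \<Longrightarrow> p*z \<le> s + j*a \<Longrightarrow> b*s + a*(j*b - q*z) \<le> n
    \<Longrightarrow> (j, z) \<in> lattice_points a b p q s n"
  by simp

lemma fib_add_shift:
  assumes "2 \<le> k"
  shows "F (i + k) = F (i + 2) * F k - F (k - 2) * F i"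
proof -
  obtain m where k: "k = Suc (Suc m)"
    using assms by (metis add_2_eq_Suc le_Suc_ex)
  have "fib (Suc (i + Suc m)) = fib (Suc (Suc m)) * fib (Suc i) + fib (Suc m) * fib i"
    by (rule fib_add)
  then show ?thesis
    unfolding k by (simp add: algebra_simps)
qed

lemma coprime_fib_add_two: "coprime (fib i) (fib (i + 2))"
  using gcd_fib_add[of i 2] by (simp add: coprime_iff_gcd_eq_1 add.commute)

lemma p_frobenius_fib_eqI:
  assumes "1 \<le> i" "2 \<le> k"
    and "at_least_four_points (F i) (F (i + 2)) (F k) (F (k - 2)) G"
    and "at_most_three_points (F i) (F (i + 2)) (F k) (F (k - 2)) G s"
  shows "p_frobenius 3 [fib i, fib (i + 2), fib (i + k)] = G"
proof (rule p_frobenius_3_eqI[where p = "fib k" and q = "fib (k - 2)" and s = s])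
  show "0 < fib i" "0 < fib (i + 2)" "0 < fib (i + k)"
    using assms(1) by (simp_all add: fib_neq_0_nat)
qed (rule assms coprime_fib_add_two fib_add_shift[OF assms(2)])+

lemma fib_around_index:
  assumes "3 \<le> i"
  shows "F (i + 2) = 2 * F i + F (i - 1)" "F (i + 1) = F i + F (i - 1)"
    "F i = F (i - 1) + F (i - 2)" "F (i - 1) = F (i - 2) + F (i - 3)"
    "F (i - 3) \<le> F (i - 2)" "1 \<le> F (i - 2)"
proof -
  obtain m where i: "i = Suc (Suc (Suc m))"
    using assms by (intro that[of "i - 3"]) arith
  show "F (i + 2) = 2 * F i + F (i - 1)" "F (i + 1) = F i + F (i - 1)"
    "F i = F (i - 1) + F (i - 2)" "F (i - 1) = F (i - 2) + F (i - 3)"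
    unfolding i by (simp_all add: numeral_3_eq_3)
  show "F (i - 3) \<le> F (i - 2)" "1 \<le> F (i - 2)"
    unfolding i using fib_Suc_mono[of m] fib_neq_0_nat[of "Suc m"] by (simp_all add: numeral_3_eq_3)
qed

section \<open>Parts (a)--(f)\<close>

lemma lattice_point_index_bound:
  fixes a b p q s j z K :: int
  assumes "0 \<le> p" "0 \<le> q" "p*z \<le> s + j*a" "j*b - q*z \<le> K"
  shows "j*(p*b - q*a) \<le> p*K + q*s"
proof -
  have "p*(j*b - K) \<le> p*(q*z)" using assms by (intro mult_left_mono) auto
  moreover have "q*(p*z) \<le> q*(s + j*a)" using assms by (intro mult_left_mono) auto
  ultimately show ?thesis by (simp add: algebra_simps)
qed

lemma at_least_four_points_part_a:
  fixes a b p q :: int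
  assumes "2 \<le> a" "a < b" "0 \<le> p" "0 \<le> q"
  shows "at_least_four_points a b p q ((4*a - 1)*b - a)"
  unfolding at_least_four_points_def
proof (intro allI impI)
  fix s assume s: "0 \<le> s" "s < a"
  have bs: "b * s \<le> b * (a - 1)" using s assms by (intro mult_left_mono) auto
  have ab: "0 < a * b" using assms by simp
  show "\<exists>T \<subseteq> lattice_points a b p q s ((4*a - 1)*b - a + a). card T = 4"
    by (rule card_four_subsetI[of "(0,0)" "(1,0)" "(2,0)" "(3::int,0::int)"];
        ((rule mem_lattice_pointsI; use s bs ab assms in \<open>(simp add: algebra_simps)?; linarith\<close>) | simp))
qed

lemma at_most_three_points_part_a:
  fixes a b p q :: int
  assumes a: "2 \<le> a" and b: "5*a \<le> 2*b" and p: "4*a \<le> p" "2*q \<le> p" and q: "1 \<le> q"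
  shows "at_most_three_points a b p q ((4*a - 1)*b - a) (a - 1)"
proof (rule at_most_three_pointsI[where u="(0,0)" and v="(1,0)" and w="(2,0)"])
  show "a dvd (4*a - 1)*b - a - b*(a - 1)"
    by (rule dvdI[of _ _ "3*b - 1"]) (simp add: algebra_simps)
next
  fix j z assume j: "0 \<le> j" and z: "0 \<le> z" and y: "p*z \<le> (a - 1) + j*a"
    and V: "b*(a - 1) + a*(j*b - q*z) \<le> (4*a - 1)*b - a"
  have "a*(j*b - q*z) \<le> a*(3*b - 1)" using V by (simp add: algebra_simps)
  then have jz: "j*b - q*z \<le> 3*b - 1" using a by simp
  have "5*(q*a) \<le> p*b"
  proof -
    have "q*(5*a) \<le> q*(2*b)" using b q by (intro mult_left_mono) auto
    also have "\<dots> \<le> p*b" using p a b by (simp add: mult_right_mono)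
    finally show ?thesis by (simp add: algebra_simps)
  qed
  have "j \<le> 3"
  proof (rule ccontr)
    assume "\<not> j \<le> 3"
    moreover have "0 < q*a" using a q by simp
    ultimately have "4*(p*b - q*a) \<le> j*(p*b - q*a)"
      using \<open>5*(q*a) \<le> p*b\<close> by (intro mult_right_mono) auto
    moreover have "j*(p*b - q*a) \<le> p*(3*b - 1) + q*(a - 1)"
      using lattice_point_index_bound[OF _ _ y jz] p q by simp
    ultimately show False using \<open>5*(q*a) \<le> p*b\<close> p q a by (simp add: algebra_simps)
  qed
  have "z = 0"
  proof (rule ccontr)
    assume "z \<noteq> 0"
    then have "p \<le> p*z" using z p a by simp
    moreover have "j*a \<le> 3*a" using \<open>j \<le> 3\<close> a by (simp add: mult_right_mono)
    ultimately show False using y p by linarith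
  qed
  then have "j*b < 3*b" using jz by simp
  then have "j < 3" using a b by (simp add: mult_less_cancel_right)
  then show "(j,z) \<in> {(0,0),(1,0),(2,0)}" using j \<open>z = 0\<close> by auto
qed (use a in auto)

lemma p_frobenius_fib_part_a:
  assumes "3 \<le> i" "i + 3 \<le> k"
  shows "p_frobenius 3 [fib i, fib (i + 2), fib (i + k)] = (4 * F i - 1) * F (i + 2) - F i"
proof (rule p_frobenius_fib_eqI[where s = "F i - 1"])
  note fi = fib_around_index[OF assms(1)] and fk = fib_around_index[of k]
  have "F (i + 3) \<le> F k" using assms by (simp add: fib_mono)
  moreover have "F (i + 3) = F (i + 2) + F (i + 1)" by (simp add: numeral_3_eq_3)
  ultimately have "4 * F i \<le> F k" using fi by linarith
  show "at_least_four_points (F i) (F (i + 2)) (F k) (F (k - 2)) ((4 * F i - 1) * F (i + 2) - F i)"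
    by (rule at_least_four_points_part_a) (use fi in linarith)+
  show "at_most_three_points (F i) (F (i + 2)) (F k) (F (k - 2)) ((4 * F i - 1) * F (i + 2) - F i) (F i - 1)"
    by (rule at_most_three_points_part_a) (use fi fk assms \<open>4 * F i \<le> F k\<close> in linarith)+
qed (use assms in auto)

lemma at_least_four_points_part_b:
  fixes a b d :: int
  assumes a: "2 \<le> a" and b: "b = 2*a + d" and d: "1 \<le> d" "d < a" "a \<le> 2*d"
  shows "at_least_four_points a b b a ((a - 1)*b + (b*b - a*a) - a)"
  unfolding at_least_four_points_def
proof (intro allI impI)
  fix s assume s: "0 \<le> s" "s < a"
  have "a*a \<le> a*(2*d)" using d a by (intro mult_left_mono) auto
  moreover have "0 < a*d" "0 < d*d" "0 < a*a" using a d by simp_all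
  ultimately have facts: "2*(a*b) \<le> b*b - a*a" "b*b = 2*(a*b) + b*d" "0 < b*d" "0 < a*b"
    unfolding b by (simp_all add: algebra_simps)
  have bs: "b * s \<le> b * w" if "s \<le> w" for w using that b d a by (intro mult_left_mono) auto
  have "b * s \<le> b * (a - 1)" using s by (intro bs) simp
  show "\<exists>T \<subseteq> lattice_points a b b a s ((a - 1)*b + (b*b - a*a) - a + a). card T = 4"
  proof (cases "s < d")
    case True
    have "b * s \<le> b * (d - 1)" using True by (intro bs) simp
    show ?thesis
      by (rule card_four_subsetI[of "(0,0)" "(1,0)" "(2,0)" "(3::int,1::int)"];
          ((rule mem_lattice_pointsI; use s facts a b d \<open>b * s \<le> b * (a - 1)\<close>
            \<open>b * s \<le> b * (d - 1)\<close> in \<open>(simp add: algebra_simps)?; linarith\<close>) | simp))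
  next
    case False
    show ?thesis
      by (rule card_four_subsetI[of "(0,0)" "(1,0)" "(2,0)" "(2::int,1::int)"];
          ((rule mem_lattice_pointsI; use s facts a b d \<open>b * s \<le> b * (a - 1)\<close> False
            in \<open>(simp add: algebra_simps)?; linarith\<close>) | simp))
  qed
qed

lemma at_most_three_points_part_b:
  fixes a b d :: int
  assumes a: "2 \<le> a" and b: "b = 2*a + d" and d: "1 \<le> d" "d < a"
  shows "at_most_three_points a b b a ((a - 1)*b + (b*b - a*a) - a) (d - 1)"
proof (rule at_most_three_pointsI[where u="(0,0)" and v="(1,0)" and w="(2,0)"])
  show "a dvd (a - 1)*b + (b*b - a*a) - a - b*(d - 1)"
    by (rule dvdI[of _ _ "3*b - a - 1"]) (simp add: b algebra_simps)
next
  fix j z assume j: "0 \<le> j" and z: "0 \<le> z" and y: "b*z \<le> (d - 1) + j*a"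
    and V: "b*(d - 1) + a*(j*b - a*z) \<le> (a - 1)*b + (b*b - a*a) - a"
  have "a*(j*b - a*z) \<le> a*(3*b - a - 1)" using V by (simp add: b algebra_simps)
  then have jz: "j*b - a*z \<le> 3*b - a - 1" using a by simp
  have sq: "b*b = 4*(a*a) + 4*(a*d) + d*d" "a*b = 2*(a*a) + a*d" "b*d = 2*(a*d) + d*d"
    by (simp_all add: b algebra_simps)
  have pos: "0 < a*a" "0 < a*d" "0 < d*d" "a*d < a*a" using a d by simp_all
  have "j \<le> 3"
  proof (rule ccontr)
    assume "\<not> j \<le> 3"
    then have "4*(b*b - a*a) \<le> j*(b*b - a*a)"
      using sq pos by (intro mult_right_mono) auto
    moreover have "j*(b*b - a*a) \<le> b*(3*b - a - 1) + a*(d - 1)"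
      using lattice_point_index_bound[OF _ _ y jz] a b d by simp
    ultimately have "4*(b*b - a*a) \<le> b*(3*b - a - 1) + a*(d - 1)" by (rule order.trans)
    then show False using pos a d unfolding b by (simp add: algebra_simps)
  qed
  show "(j,z) \<in> {(0,0),(1,0),(2,0)}"
  proof (cases "z = 0")
    case True
    then have "j \<noteq> 3" using jz a b d by auto
    then show ?thesis using True j \<open>j \<le> 3\<close> by auto
  next
    case False
    then have "b \<le> b*z" using z a b d by simp
    moreover have "j*a \<le> 2*a" if "j \<le> 2" using that a by (simp add: mult_right_mono)
    ultimately have "j = 3" using y b \<open>j \<le> 3\<close> by linarith
    then have "a*1 < a*z" using jz by simp
    then have "1 < z" using a by (simp add: mult_less_cancel_left_pos)
    then have "b*2 \<le> b*z" using a b d by (intro mult_left_mono) auto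
    then show ?thesis using y \<open>j = 3\<close> b d by simp
  qed
qed (use a d in auto)

lemma p_frobenius_fib_part_b:
  assumes "3 \<le> i"
  shows "p_frobenius 3 [fib i, fib (i + 2), fib (2*i + 2)] = (F i - 1) * F (i + 2) + F (2*i + 2) - F i"
proof -
  note fi = fib_around_index[OF assms]
  let ?G = "(F i - 1)*F (i + 2) + (F (i + 2)*F (i + 2) - F i*F i) - F i"
  have "p_frobenius 3 [fib i, fib (i + 2), fib (i + (i + 2))] = ?G"
  proof (rule p_frobenius_fib_eqI[where s = "F (i - 1) - 1"])
    show "at_least_four_points (F i) (F (i + 2)) (F (i + 2)) (F (i + 2 - 2)) ?G"
      unfolding add_diff_cancel_right' by (rule at_least_four_points_part_b[where d = "F (i - 1)"]) (use fi in linarith)+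
    show "at_most_three_points (F i) (F (i + 2)) (F (i + 2)) (F (i + 2 - 2)) ?G (F (i - 1) - 1)"
      unfolding add_diff_cancel_right' by (rule at_most_three_points_part_b[where d = "F (i - 1)"]) (use fi in linarith)+
  qed (use assms in auto)
  moreover have "F (i + (i + 2)) = F (i + 2)*F (i + 2) - F i*F i"
    using fib_add_shift[of "i + 2" i] by simp
  moreover have "2*i + 2 = i + (i + 2)" by simp
  ultimately show ?thesis by (simp only:)
qed

lemma at_least_four_points_part_c:
  fixes a b d :: int
  assumes a: "2 \<le> a" and b: "b = 2*a + d" and d: "1 \<le> d" "d < a" "3*d \<le> 2*a"
  shows "at_least_four_points a b (a + d) d ((2*a - d - 1)*b + (b*(a + d) - d*a) - a)"
  unfolding at_least_four_points_def
proof (intro allI impI)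
  fix s assume s: "0 \<le> s" "s < a"
  have "a*d \<le> a*a" "d*d \<le> a*d" using d a by (simp_all add: mult_right_mono)
  moreover have "3*(a*d) \<le> 2*(a*a)" using mult_left_mono[OF d(3), of a] a by (simp add: algebra_simps)
  moreover have "b*d \<le> a*b" using mult_left_mono[of d a b] a b d by (simp add: algebra_simps)
  moreover have "0 < d*d" "0 < a*d" "0 < a*a" "0 < b*d" "0 < a*b" using a b d by simp_all
  moreover have "a*b = 2*(a*a) + a*d" "b*d = 2*(a*d) + d*d" by (simp_all add: b algebra_simps)
  ultimately have facts: "a*d \<le> a*a" "d*d \<le> a*d" "3*(a*d) \<le> 2*(a*a)" "b*d \<le> a*b"
    "0 < d*d" "0 < a*d" "0 < a*a" "0 < b*d" "0 < a*b" "a*b = 2*(a*a) + a*d" "b*d = 2*(a*d) + d*d"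
    by simp_all
  have bs: "b * s \<le> b * w" if "s \<le> w" for w using that b d a by (intro mult_left_mono) auto
  have "b * s \<le> b * (a - 1)" using s by (intro bs) simp
  show "\<exists>T \<subseteq> lattice_points a b (a + d) d s ((2*a - d - 1)*b + (b*(a + d) - d*a) - a + a). card T = 4"
  proof (cases "s < d")
    case True
    have "b * s \<le> b * (d - 1)" using True by (intro bs) simp
    show ?thesis
      by (rule card_four_subsetI[of "(0,0)" "(1,0)" "(2,1)" "(2::int,0::int)"];
          ((rule mem_lattice_pointsI; use s facts d \<open>b * s \<le> b * (a - 1)\<close>
            \<open>b * s \<le> b * (d - 1)\<close> in \<open>(simp add: algebra_simps)?; linarith\<close>) | simp))
  next
    case False
    show ?thesis
      by (rule card_four_subsetI[of "(0,0)" "(1,1)" "(1,0)" "(2::int,1::int)"];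
          ((rule mem_lattice_pointsI; use s facts d \<open>b * s \<le> b * (a - 1)\<close> False
            in \<open>(simp add: algebra_simps)?; linarith\<close>) | simp))
  qed
qed

lemma at_most_three_points_part_c:
  fixes a b d :: int
  assumes a: "2 \<le> a" and b: "b = 2*a + d" and d: "1 \<le> d" "d < a" "a \<le> 2*d"
  shows "at_most_three_points a b (a + d) d ((2*a - d - 1)*b + (b*(a + d) - d*a) - a) (a - 1)"
proof (rule at_most_three_pointsI[where u="(0,0)" and v="(1,0)" and w="(1,1)"])
  show "a dvd (2*a - d - 1)*b + (b*(a + d) - d*a) - a - b*(a - 1)"
    by (rule dvdI[of _ _ "2*b - d - 1"]) (simp add: algebra_simps)
next
  fix j z assume j: "0 \<le> j" and z: "0 \<le> z" and y: "(a + d)*z \<le> (a - 1) + j*a"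
    and V: "b*(a - 1) + a*(j*b - d*z) \<le> (2*a - d - 1)*b + (b*(a + d) - d*a) - a"
  have "a*(j*b - d*z) \<le> a*(2*b - d - 1)" using V by (simp add: algebra_simps)
  then have jz: "j*b - d*z \<le> 2*b - d - 1" using a by simp
  have pos: "0 < a*a" "0 < a*d" "0 < d*d" "a*d < a*a" "d*d < a*d" using a d by simp_all
  have "j \<le> 2"
  proof (rule ccontr)
    assume "\<not> j \<le> 2"
    moreover have "0 \<le> (a + d)*b - d*a" using pos unfolding b by (simp add: algebra_simps)
    ultimately have "3*((a + d)*b - d*a) \<le> j*((a + d)*b - d*a)"
      by (intro mult_right_mono) auto
    moreover have "j*((a + d)*b - d*a) \<le> (a + d)*(2*b - d - 1) + d*(a - 1)"
      using lattice_point_index_bound[OF _ _ y jz] a d by simp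
    ultimately have "3*((a + d)*b - d*a) \<le> (a + d)*(2*b - d - 1) + d*(a - 1)"
      by (rule order.trans)
    then show False using pos a d unfolding b by (simp add: algebra_simps)
  qed
  have z_less: "z < w" if "(a + d)*z < (a + d)*w" for w
    using that a d by (simp add: mult_less_cancel_left_pos)
  consider "j = 0" | "j = 1" | "j = 2" using j \<open>j \<le> 2\<close> by linarith
  then show "(j,z) \<in> {(0,0),(1,0),(1,1)}"
  proof cases
    case 1
    then have "j*a = 0" by simp
    then have "(a + d)*z < (a + d)*1" unfolding mult_1_right using y d by linarith
    then have "z < 1" by (rule z_less)
    then show ?thesis using 1 z by auto
  next
    case 2
    then have "j*a = a" by simp
    then have "(a + d)*z < (a + d)*2" using y d by (simp only: distrib_right; linarith)
    then have "z < 2" by (rule z_less)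
    then show ?thesis using 2 z by auto
  next
    case 3
    then have "d*1 < d*z" using jz by simp
    then have "2 \<le> z" using d by (simp add: mult_less_cancel_left_pos)
    then have "(a + d)*2 \<le> (a + d)*z" using a d by (intro mult_left_mono) auto
    moreover have "j*a = 2*a" using 3 by simp
    ultimately show ?thesis using y d by (simp only: distrib_right; linarith)
  qed
qed (use a d in auto)

lemma p_frobenius_fib_part_c:
  assumes "3 \<le> i"
  shows "p_frobenius 3 [fib i, fib (i + 2), fib (2*i + 1)]
    = (F i + F (i - 2) - 1) * F (i + 2) + F (2*i + 1) - F i"
proof -
  note fi = fib_around_index[OF assms]
  have p: "F (i + 1) = F i + F (i - 1)" and q: "F (i + 1 - 2) = F (i - 1)"
    using fi assms by (simp_all add: Suc_diff_Suc numeral_2_eq_2)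
  let ?G = "(2*F i - F (i - 1) - 1)*F (i + 2) + (F (i + 2)*(F i + F (i - 1)) - F (i - 1)*F i) - F i"
  have "p_frobenius 3 [fib i, fib (i + 2), fib (i + (i + 1))] = ?G"
  proof (rule p_frobenius_fib_eqI[where s = "F i - 1"])
    show "at_least_four_points (F i) (F (i + 2)) (F (i + 1)) (F (i + 1 - 2)) ?G"
      unfolding p q by (rule at_least_four_points_part_c) (use fi in linarith)+
    show "at_most_three_points (F i) (F (i + 2)) (F (i + 1)) (F (i + 1 - 2)) ?G (F i - 1)"
      unfolding p q by (rule at_most_three_points_part_c) (use fi in linarith)+
  qed (use assms in auto)
  moreover have "F (i + (i + 1)) = F (i + 2)*(F i + F (i - 1)) - F (i - 1)*F i"
    using fib_add_shift[of "i + 1" i] assms p q by simp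
  moreover have "2*i + 1 = i + (i + 1)" "F i + F (i - 2) = 2*F i - F (i - 1)" using fi by simp_all
  ultimately show ?thesis by (simp only:)
qed

lemma at_least_four_points_part_d:
  fixes a b e :: int
  assumes a: "2 \<le> a" and b: "2*a < b" and e: "1 \<le> e" "e < a"
  shows "at_least_four_points a b a e ((a - 1)*b + 2*(b*a - e*a) - a)"
  unfolding at_least_four_points_def
proof (intro allI impI)
  fix s assume s: "0 \<le> s" "s < a"
  have "b * s \<le> b * (a - 1)" using s a b by (intro mult_left_mono) auto
  moreover have "a*e \<le> a*a" "2*(a*a) \<le> a*b" using a b e by (simp_all add: mult_left_mono)
  moreover have "0 < a*e" "0 < a*a" "0 < a*b" using a b e by simp_all
  ultimately have facts: "b * s \<le> b * (a - 1)" "a*e \<le> a*a" "2*(a*a) \<le> a*b"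
    "0 < a*e" "0 < a*a" "0 < a*b" by simp_all
  show "\<exists>T \<subseteq> lattice_points a b a e s ((a - 1)*b + 2*(b*a - e*a) - a + a). card T = 4"
    by (rule card_four_subsetI[of "(0,0)" "(1,1)" "(1,0)" "(2::int,2::int)"];
        ((rule mem_lattice_pointsI; use s facts a in \<open>(simp add: algebra_simps)?; linarith\<close>) | simp))
qed

lemma at_most_three_points_part_d:
  fixes a b e :: int
  assumes a: "2 \<le> a" and b: "2*a < b" and e: "1 \<le> e" "e < a"
  shows "at_most_three_points a b a e ((a - 1)*b + 2*(b*a - e*a) - a) (a - 1)"
proof (rule at_most_three_pointsI[where u="(0,0)" and v="(1,0)" and w="(1,1)"])
  show "a dvd (a - 1)*b + 2*(b*a - e*a) - a - b*(a - 1)"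
    by (rule dvdI[of _ _ "2*b - 2*e - 1"]) (simp add: algebra_simps)
next
  fix j z assume j: "0 \<le> j" and z: "0 \<le> z" and y: "a*z \<le> (a - 1) + j*a"
    and V: "b*(a - 1) + a*(j*b - e*z) \<le> (a - 1)*b + 2*(b*a - e*a) - a"
  have "a*(j*b - e*z) \<le> a*(2*b - 2*e - 1)" using V by (simp add: algebra_simps)
  then have jz: "j*b - e*z \<le> 2*b - 2*e - 1" using a by simp
  have "z \<le> j"
  proof (rule ccontr)
    assume "\<not> z \<le> j"
    then have "a*(j + 1) \<le> a*z" using a by (intro mult_left_mono) auto
    then show False using y by (simp add: algebra_simps)
  qed
  have "j \<le> 1"
  proof (rule ccontr)
    assume "\<not> j \<le> 1"
    then have "0 \<le> (j - 2)*(b - e)" using a b e by simp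
    moreover have "e*z \<le> e*j" using \<open>z \<le> j\<close> e by (intro mult_left_mono) auto
    ultimately show False using jz by (simp add: algebra_simps)
  qed
  then show "(j,z) \<in> {(0,0),(1,0),(1,1)}"
    using j z \<open>z \<le> j\<close> by (cases "j = 0") auto
qed (use a in auto)

lemma p_frobenius_fib_part_d:
  assumes "3 \<le> i"
  shows "p_frobenius 3 [fib i, fib (i + 2), fib (2*i)] = (F i - 1) * F (i + 2) + 2 * F (2*i) - F i"
proof -
  note fi = fib_around_index[OF assms]
  let ?G = "(F i - 1)*F (i + 2) + 2*(F (i + 2)*F i - F (i - 2)*F i) - F i"
  have "p_frobenius 3 [fib i, fib (i + 2), fib (i + i)] = ?G"
  proof (rule p_frobenius_fib_eqI[where s = "F i - 1"])
    show "at_least_four_points (F i) (F (i + 2)) (F i) (F (i - 2)) ?G"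
      by (rule at_least_four_points_part_d) (use fi in linarith)+
    show "at_most_three_points (F i) (F (i + 2)) (F i) (F (i - 2)) ?G (F i - 1)"
      by (rule at_most_three_points_part_d) (use fi in linarith)+
  qed (use assms in auto)
  moreover have "F (i + i) = F (i + 2)*F i - F (i - 2)*F i"
    using fib_add_shift[of i i] assms by simp
  moreover have "2*i = i + i" by simp
  ultimately show ?thesis by (simp only:)
qed

lemma at_least_four_points_part_e:
  fixes a b d e h :: int
  assumes a: "a = d + e" and d: "d = e + h" and b: "b = 2*a + d" and h: "1 \<le> h" "h \<le> e"
  shows "at_least_four_points a b d h ((e - 1)*b + 3*(b*d - h*a) - a)"
  unfolding at_least_four_points_def
proof (intro allI impI)
  fix s assume s: "0 \<le> s" "s < a"
  have "0 \<le> (3*a - d)*(a - d)" using assms by simp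
  then have "3*(a*h) \<le> b*d" using assms by (simp add: algebra_simps)
  moreover have "0 < a*h" "0 < a*a" "0 < a*b" "0 < b*d" "0 < d*h" "0 < b*h" using assms by simp_all
  moreover have "2*(a*h) \<le> a*b" "3*(a*h) \<le> a*b" using assms calculation by (simp_all add: algebra_simps)
  moreover have "(e - 1)*b + 3*(b*d - h*a) - a + a = b*(a + 2*d - 1) - 3*(a*h)"
    using assms by (simp add: algebra_simps)
  ultimately have facts: "3*(a*h) \<le> b*d" "0 < a*h" "0 < a*a" "0 < a*b" "0 < b*d" "0 < d*h" "0 < b*h"
    "(e - 1)*b + 3*(b*d - h*a) - a + a = b*(a + 2*d - 1) - 3*(a*h)" "2*(a*h) \<le> a*b" "3*(a*h) \<le> a*b"
    by simp_all
  have bs: "b * s \<le> b * w" if "s \<le> w" for w using that assms by (intro mult_left_mono) auto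
  consider "s < h" | "h \<le> s" "s < d" | "d \<le> s" by linarith
  then show "\<exists>T \<subseteq> lattice_points a b d h s ((e - 1)*b + 3*(b*d - h*a) - a + a). card T = 4"
  proof cases
    case 1
    have "b * s \<le> b * (h - 1)" using 1 by (intro bs) simp
    moreover have "b*(a + 2*d - 1) - 3*(a*h) = b*(h - 1) + 2*(a*b) - 3*(a*h)"
      using assms by (simp add: algebra_simps)
    ultimately have bounds: "b * s \<le> b * (h - 1)"
      "b*(a + 2*d - 1) - 3*(a*h) = b*(h - 1) + 2*(a*b) - 3*(a*h)" by simp_all
    show ?thesis
      by (rule card_four_subsetI[of "(0,0)" "(1,1)" "(1,0)" "(2::int,3::int)"];
          ((rule mem_lattice_pointsI; use s 1 facts bounds a d h in \<open>(simp add: algebra_simps)?; linarith\<close>) | simp))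
  next
    case 2
    have "b * s \<le> b * (d - 1)" using 2 by (intro bs) simp
    moreover have "b*(a + 2*d - 1) - 3*(a*h) = b*(d - 1) + a*b + (b*d - 3*(a*h))"
      using assms by (simp add: algebra_simps)
    ultimately have bounds: "b * s \<le> b * (d - 1)"
      "b*(a + 2*d - 1) - 3*(a*h) = b*(d - 1) + a*b + (b*d - 3*(a*h))" by simp_all
    show ?thesis
      by (rule card_four_subsetI[of "(0,0)" "(1,2)" "(1,1)" "(1::int,0::int)"];
          ((rule mem_lattice_pointsI; use s 2 facts bounds a d in \<open>(simp add: algebra_simps)?; linarith\<close>) | simp))
  next
    case 3
    have "b * s \<le> b * (a - 1)" using s by (intro bs) simp
    moreover have "b*(a + 2*d - 1) - 3*(a*h) = b*(a - 1) + a*b + d*h - a*h"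
      using assms by (simp add: algebra_simps)
    ultimately have bounds: "b * s \<le> b * (a - 1)"
      "b*(a + 2*d - 1) - 3*(a*h) = b*(a - 1) + a*b + d*h - a*h" by simp_all
    show ?thesis
      by (rule card_four_subsetI[of "(0,1)" "(0,0)" "(1,2)" "(1::int,1::int)"];
          ((rule mem_lattice_pointsI; use s 3 facts(1-8) bounds a d in \<open>(simp only: algebra_simps)?; linarith\<close>) | simp))
  qed
qed

lemma at_most_three_points_part_e:
  fixes a b d e h :: int
  assumes a: "a = d + e" and d: "d = e + h" and b: "b = 2*a + d" and h: "1 \<le> h" "h \<le> e"
  shows "at_most_three_points a b d h ((e - 1)*b + 3*(b*d - h*a) - a) (h - 1)"
proof (rule at_most_three_pointsI[where u="(0,0)" and v="(1,0)" and w="(1,1)"])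
  show "a dvd (e - 1)*b + 3*(b*d - h*a) - a - b*(h - 1)"
    by (rule dvdI[of _ _ "2*b - 3*h - 1"]) (simp add: assms algebra_simps)
next
  fix j z assume j: "0 \<le> j" and z: "0 \<le> z" and y: "d*z \<le> (h - 1) + j*a"
    and V: "b*(h - 1) + a*(j*b - h*z) \<le> (e - 1)*b + 3*(b*d - h*a) - a"
  have "a*(j*b - h*z) \<le> a*(2*b - 3*h - 1)" using V by (simp add: assms algebra_simps)
  then have jz: "j*b - h*z \<le> 2*b - 3*h - 1" using assms by simp
  have "0 \<le> (3*a - d)*(a - d)" using assms by simp
  then have "3*(h*a) \<le> d*b" using assms by (simp add: algebra_simps)
  have "h*h \<le> d*h" using assms by (intro mult_right_mono) auto
  have "j \<le> 2"
  proof (rule ccontr)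
    assume "\<not> j \<le> 2"
    have "0 < h*a" "0 < d*h" "0 < d" using assms by simp_all
    have "3*(d*b - h*a) \<le> j*(d*b - h*a)"
      by (intro mult_right_mono) (use \<open>\<not> j \<le> 2\<close> \<open>3*(h*a) \<le> d*b\<close> \<open>0 < h*a\<close> in linarith)+
    also have "\<dots> \<le> d*(2*b - 3*h - 1) + h*(h - 1)"
      using lattice_point_index_bound[OF _ _ y jz] assms by simp
    also have "\<dots> = 2*(d*b) - 3*(d*h) - d + h*h - h"
      by (simp add: algebra_simps)
    finally show False
      using \<open>3*(h*a) \<le> d*b\<close> \<open>h*h \<le> d*h\<close> \<open>0 < d*h\<close> \<open>0 < d\<close> h
      unfolding right_diff_distrib by linarith
  qed
  have z_less: "z < w" if "d*z < d*w" for w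
    using that assms by (simp add: mult_less_cancel_left_pos)
  consider "j = 0" | "j = 1" | "j = 2" using j \<open>j \<le> 2\<close> by linarith
  then show "(j,z) \<in> {(0,0),(1,0),(1,1)}"
  proof cases
    case 1
    then have "j*a = 0" by simp
    then have "d*z < d*1" unfolding mult_1_right using y assms by linarith
    then have "z < 1" by (rule z_less)
    then show ?thesis using 1 z by auto
  next
    case 2
    then have "j*a = a" by simp
    then have "d*z < d*2" using y assms by linarith
    then have "z < 2" by (rule z_less)
    then show ?thesis using 2 z by auto
  next
    case 3
    then have "h*3 < h*z" using jz by (simp add: algebra_simps)
    then have "4 \<le> z" using h by (simp add: mult_less_cancel_left_pos)
    then have "d*4 \<le> d*z" using assms by (intro mult_left_mono) auto
    moreover have "j*a = 2*a" using 3 by simp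
    ultimately show ?thesis using y assms by linarith
  qed
qed (use assms in auto)

lemma p_frobenius_fib_part_e:
  assumes "4 \<le> i"
  shows "p_frobenius 3 [fib i, fib (i + 2), fib (2*i - 1)]
    = (F (i - 2) - 1) * F (i + 2) + 3 * F (2*i - 1) - F i"
proof -
  note fi = fib_around_index[of i] and fi' = fib_around_index[of "i - 1"]
  have q: "F (i - 1 - 2) = F (i - 3)" by (simp add: numeral_3_eq_3 numeral_2_eq_2)
  have "1 \<le> F (i - 3)" using fi' assms q by simp
  let ?G = "(F (i - 2) - 1)*F (i + 2) + 3*(F (i + 2)*F (i - 1) - F (i - 3)*F i) - F i"
  have "p_frobenius 3 [fib i, fib (i + 2), fib (i + (i - 1))] = ?G"
  proof (rule p_frobenius_fib_eqI[where s = "F (i - 3) - 1"])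
    show "at_least_four_points (F i) (F (i + 2)) (F (i - 1)) (F (i - 1 - 2)) ?G"
      unfolding q by (rule at_least_four_points_part_e) (use fi assms \<open>1 \<le> F (i - 3)\<close> in linarith)+
    show "at_most_three_points (F i) (F (i + 2)) (F (i - 1)) (F (i - 1 - 2)) ?G (F (i - 3) - 1)"
      unfolding q by (rule at_most_three_points_part_e) (use fi assms \<open>1 \<le> F (i - 3)\<close> in linarith)+
  qed (use assms in auto)
  moreover have "F (i + (i - 1)) = F (i + 2)*F (i - 1) - F (i - 3)*F i"
    using fib_add_shift[of "i - 1" i] assms q by simp
  moreover have "2*i - 1 = i + (i - 1)" using assms by simp
  ultimately show ?thesis by (simp only:)
qed

lemma at_least_four_points_part_f:
  fixes a b d e h u l :: int
  assumes a: "a = d + e" and d: "d = e + h" and e: "e = h + u" and h: "h = u + l"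
    and b: "b = 2*a + d" and l: "1 \<le> l" "l \<le> u" "u \<le> 2*l"
  shows "at_least_four_points a b e u ((l - 1)*b + 5*(b*e - u*a) - a)"
  unfolding at_least_four_points_def
proof (intro allI impI)
  fix s assume s: "0 \<le> s" "s < a"
  have ul: "a = 5*u + 3*l" "b = 13*u + 8*l" "d = 3*u + 2*l" "e = 2*u + l" "h = u + l"
    using assms by simp_all
  have "u*u \<le> 2*(u*l)" using l by (simp add: mult_left_mono)
  have pos: "0 < u*l" "0 < l*l" "0 < u*u" "0 < b*e" "0 < b*d" "0 < a*u" "1 \<le> e" "1 \<le> h" "1 \<le> u"
    using l(1,2) ul by simp_all
  have "b*d - 5*(a*u) = 14*(u*u) + 35*(u*l) + 16*(l*l)" "b*h - 3*(a*u) = 12*(u*l) + 8*(l*l) - 2*(u*u)"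
    "b*l - a*u = 10*(u*l) + 8*(l*l) - 5*(u*u)"
    unfolding ul by (simp_all add: algebra_simps)
  then have bounds: "5*(a*u) \<le> b*d" "3*(a*u) \<le> b*h" "a*u \<le> b*l"
    using pos \<open>u*u \<le> 2*(u*l)\<close> by linarith+
  have shape: "a*b = b*e + b*d" "a*b - 2*(b*e) = b*h" "a*b - 3*(b*e) + b*h = b*l"
    "(l - 1)*b + 5*(b*e - u*a) - a + a = 2*(a*b) - b - 5*(a*u)"
    "a*b - 5*(a*u) = a*(b - 5*u)"
    using assms ul by (simp_all add: algebra_simps)
  have "0 < a*(b - 5*u)" using l(1,2) unfolding ul by simp
  have bs: "b * s \<le> b * w" if "s \<le> w" for w using that ul l by (intro mult_left_mono) auto
  have "b * s \<le> b * (a - 1)" using s by (intro bs) simp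
  consider "s < e" | "e \<le> s" "s < 2*e" | "2*e \<le> s" "s < 3*e - h" | "3*e - h \<le> s"
    by linarith
  then show "\<exists>T \<subseteq> lattice_points a b e u s ((l - 1)*b + 5*(b*e - u*a) - a + a). card T = 4"
  proof cases
    case 1
    have "b * s \<le> b * (e - 1)" using 1 by (intro bs) simp
    show ?thesis
      by (rule card_four_subsetI[of "(0,0)" "(1,2)" "(1,1)" "(1::int,0::int)"];
          ((rule mem_lattice_pointsI; use s \<open>b * s \<le> b * (e - 1)\<close> shape \<open>0 < a*(b - 5*u)\<close> bounds(1) pos a d e in \<open>(simp only: algebra_simps)?; linarith\<close>) | simp))
  next
    case 2
    have "b * s \<le> b * (2*e - 1)" using 2 by (intro bs) simp
    show ?thesis
      by (rule card_four_subsetI[of "(0,1)" "(0,0)" "(1,3)" "(1::int,2::int)"];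
          ((rule mem_lattice_pointsI; use s 2 \<open>b * s \<le> b * (2*e - 1)\<close> shape \<open>0 < a*(b - 5*u)\<close> bounds(1,2) pos a d e in \<open>(simp only: algebra_simps)?; linarith\<close>) | simp))
  next
    case 3
    have "b * s \<le> b * (3*e - h - 1)" using 3 by (intro bs) simp
    show ?thesis
      by (rule card_four_subsetI[of "(0,2)" "(0,1)" "(0,0)" "(1::int,4::int)"];
          ((rule mem_lattice_pointsI; use s 3 \<open>b * s \<le> b * (a - 1)\<close> \<open>b * s \<le> b * (3*e - h - 1)\<close> shape \<open>0 < a*(b - 5*u)\<close> bounds(3) pos a d e in \<open>(simp only: algebra_simps)?; linarith\<close>) | simp))
  next
    case 4
    show ?thesis
      by (rule card_four_subsetI[of "(0,2)" "(0,1)" "(0,0)" "(1::int,5::int)"];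
          ((rule mem_lattice_pointsI; use s 4 \<open>b * s \<le> b * (a - 1)\<close> shape \<open>0 < a*(b - 5*u)\<close> pos a d e in \<open>(simp only: algebra_simps)?; linarith\<close>) | simp))
  qed
qed

lemma at_most_three_points_part_f:
  fixes a b d e h u l :: int
  assumes a: "a = d + e" and d: "d = e + h" and e: "e = h + u" and h: "h = u + l"
    and b: "b = 2*a + d" and l: "1 \<le> l" "l \<le> u"
  shows "at_most_three_points a b e u ((l - 1)*b + 5*(b*e - u*a) - a) (a - 1)"
proof (rule at_most_three_pointsI[where u="(0,0)" and v="(0,1)" and w="(0,2)"])
  have ul: "a = 5*u + 3*l" "b = 13*u + 8*l" "e = 2*u + l" using assms by simp_all
  have G: "(l - 1)*b + 5*(b*e - u*a) - a - b*(a - 1) = a*(b - 5*u - 1)"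
    unfolding ul by (simp add: algebra_simps)
  then show "a dvd (l - 1)*b + 5*(b*e - u*a) - a - b*(a - 1)" by simp
  fix j z assume j: "0 \<le> j" and z: "0 \<le> z" and y: "e*z \<le> (a - 1) + j*a"
    and V: "b*(a - 1) + a*(j*b - u*z) \<le> (l - 1)*b + 5*(b*e - u*a) - a"
  have "a*(j*b - u*z) \<le> a*(b - 5*u - 1)" using V G by linarith
  then have jz: "j*b - u*z \<le> b - 5*u - 1" using ul l by simp
  have "j \<le> 1"
  proof (rule ccontr)
    assume "\<not> j \<le> 1"
    have "e*b - 3*(u*a) = 11*(u*u) + 20*(u*l) + 8*(l*l)" unfolding ul by (simp add: algebra_simps)
    moreover have "0 < u*u" "0 < u*l" "0 < l*l" "0 < u*a" "0 < e*u" using l ul by simp_all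
    ultimately have "3*(u*a) \<le> e*b" "0 < u*a" "0 < e*u" by linarith+
    have "2*(e*b - u*a) \<le> j*(e*b - u*a)"
      by (intro mult_right_mono) (use \<open>\<not> j \<le> 1\<close> \<open>3*(u*a) \<le> e*b\<close> \<open>0 < u*a\<close> in linarith)+
    also have "\<dots> \<le> e*(b - 5*u - 1) + u*(a - 1)"
      using lattice_point_index_bound[OF _ _ y jz] ul l by simp
    also have "\<dots> = e*b - 5*(e*u) - e + u*a - u"
      by (simp add: algebra_simps)
    finally show False
      using \<open>3*(u*a) \<le> e*b\<close> \<open>0 < e*u\<close> ul l unfolding right_diff_distrib by linarith
  qed
  have z_less: "z < w" if "e*z < e*w" for w
    using that ul l by (simp add: mult_less_cancel_left_pos)
  consider "j = 0" | "j = 1" using j \<open>j \<le> 1\<close> by linarith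
  then show "(j,z) \<in> {(0,0),(0,1),(0,2)}"
  proof cases
    case 1
    have "a - 1 < e*3" using ul l by linarith
    moreover have "j*a = 0" using 1 by simp
    ultimately have "e*z < e*3" using y by linarith
    then have "z < 3" by (rule z_less)
    then show ?thesis using 1 z by auto
  next
    case 2
    then have "u*5 < u*z" using jz by (simp add: algebra_simps)
    then have "6 \<le> z" using ul l by (simp add: mult_less_cancel_left_pos)
    then have "e*6 \<le> e*z" using ul l by (intro mult_left_mono) auto
    moreover have "2*a - 1 < e*6" using ul l by linarith
    moreover have "j*a = a" using 2 by simp
    ultimately show ?thesis using y by linarith
  qed
qed (use assms in auto)

lemma p_frobenius_fib_part_f:
  assumes "6 \<le> i"
  shows "p_frobenius 3 [fib i, fib (i + 2), fib (2*i - 2)]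
    = (F (i - 5) - 1) * F (i + 2) + 5 * F (2*i - 2) - F i"
proof -
  obtain m where i: "i = m + 6" using assms by (metis add.commute le_Suc_ex)
  have fibs: "F i = F (i - 1) + F (i - 2)" "F (i - 1) = F (i - 2) + F (i - 3)"
    "F (i - 2) = F (i - 3) + F (i - 4)" "F (i - 3) = F (i - 4) + F (i - 5)"
    "F (i + 2) = 2*F i + F (i - 1)" "F (i - 2 - 2) = F (i - 4)"
    "1 \<le> F (i - 5)" "F (i - 5) \<le> F (i - 4)" "F (i - 4) \<le> 2*F (i - 5)"
    unfolding i using fib_Suc_mono[of m] fib_Suc_mono[of "Suc m"] fib_neq_0_nat[of "Suc m"]
    by (simp_all add: numeral_eq_Suc)
  let ?G = "(F (i - 5) - 1)*F (i + 2) + 5*(F (i + 2)*F (i - 2) - F (i - 4)*F i) - F i"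
  have "p_frobenius 3 [fib i, fib (i + 2), fib (i + (i - 2))] = ?G"
  proof (rule p_frobenius_fib_eqI[where s = "F i - 1"])
    show "at_least_four_points (F i) (F (i + 2)) (F (i - 2)) (F (i - 2 - 2)) ?G"
      unfolding fibs(6)
      by (rule at_least_four_points_part_f[where d = "F (i - 1)" and h = "F (i - 3)"]) (use fibs in linarith)+
    show "at_most_three_points (F i) (F (i + 2)) (F (i - 2)) (F (i - 2 - 2)) ?G (F i - 1)"
      unfolding fibs(6)
      by (rule at_most_three_points_part_f[where d = "F (i - 1)" and h = "F (i - 3)"]) (use fibs in linarith)+
  qed (use assms in auto)
  moreover have "F (i + (i - 2)) = F (i + 2)*F (i - 2) - F (i - 4)*F i"
    using fib_add_shift[of "i - 2" i] assms fibs(6) by simp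
  moreover have "2*i - 2 = i + (i - 2)" using assms by simp
  ultimately show ?thesis by (simp only:)
qed

lemma p_frobenius_5_7_8: "p_frobenius 3 [fib 5, fib 7, fib 8] = 92"
proof -
  have fibs: "F 5 = 5" "F (5 + 2) = 13" "F 3 = 2" "F (3 - 2) = 1"
    by (simp_all add: numeral_eq_Suc)
  have four: "at_least_four_points 5 13 2 1 92"
    unfolding at_least_four_points_def
  proof (intro allI impI)
    fix s :: int assume "0 \<le> s" "s < 5"
    then consider "s = 0" | "s = 1" | "s = 2" | "s = 3" | "s = 4" by linarith
    then show "\<exists>T \<subseteq> lattice_points 5 13 2 1 s (92 + 5). card T = 4"
    proof cases
      case 1 then show ?thesis by (intro card_four_subsetI[of "(0,0)" "(1,2)" "(1,1)" "(1,0)"]) auto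
    next
      case 2 then show ?thesis by (intro card_four_subsetI[of "(0,0)" "(1,3)" "(1,2)" "(1,1)"]) auto
    next
      case 3 then show ?thesis by (intro card_four_subsetI[of "(0,1)" "(0,0)" "(1,3)" "(1,2)"]) auto
    next
      case 4 then show ?thesis by (intro card_four_subsetI[of "(0,1)" "(0,0)" "(1,4)" "(1,3)"]) auto
    next
      case 5 then show ?thesis by (intro card_four_subsetI[of "(0,2)" "(0,1)" "(0,0)" "(1,4)"]) auto
    qed
  qed
  have three: "at_most_three_points 5 13 2 1 92 4"
  proof (rule at_most_three_pointsI[where u="(0,0)" and v="(0,1)" and w="(0,2)"])
    fix j z :: int assume "0 \<le> j" "0 \<le> z" "2*z \<le> 4 + j*5" "13*4 + 5*(j*13 - 1*z) \<le> 92"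
    then have "2*z \<le> 4 + 5*j" "13*j - z \<le> 8" by (simp_all add: algebra_simps)
    moreover from calculation have "j = 0" using \<open>0 \<le> j\<close> by auto
    ultimately have "j = 0" "z \<le> 2" by auto
    then show "(j,z) \<in> {(0,0),(0,1),(0,2)}" using \<open>0 \<le> z\<close> by auto
  qed auto
  have "p_frobenius 3 [fib 5, fib (5 + 2), fib (5 + 3)] = 92"
    by (rule p_frobenius_fib_eqI[where s = 4]) (use four three in \<open>simp_all only: fibs\<close>)
  then show ?thesis by simp
qed

section \<open>Part (g)\<close>

lemma part_g_inequalities:
  fixes a b p q c r t :: int
  assumes a: "a = r*p + t" and t: "1 \<le> t" "t \<le> p" and r: "3 \<le> r" and q: "1 \<le> q" "2*q \<le> p"
    and b: "5*a \<le> 2*b" and c: "c = b*p - q*a"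
  shows "2 \<le> p" "3*p + 1 \<le> a" "0 < b" "5*(a*q) \<le> b*p" "0 < a*q" "a*q \<le> c"
    "a*b = r*c + t*b + r*(a*q)" "3*(a*q) \<le> r*c + t*b" "a*c = r*(p*c) + t*c" "c \<le> p*c"
    "3*(p*c) \<le> r*(p*c)" "0 < p*b" "0 < p*a" "t*(a*q) \<le> t*c" "p*(a*q) \<le> p*c"
proof -
  show p: "2 \<le> p" using q by simp
  have "3*p \<le> r*p" using r p by (intro mult_right_mono) auto
  then show a3p: "3*p + 1 \<le> a" using a t by linarith
  show b0: "0 < b" using b a3p p by simp
  have "p*(5*a) \<le> p*(2*b)" using b p by (intro mult_left_mono) auto
  moreover have "(2*q)*(5*a) \<le> p*(5*a)" using q a3p p by (intro mult_right_mono) auto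
  ultimately show bp: "5*(a*q) \<le> b*p" by (simp add: algebra_simps)
  show aq: "0 < a*q" using a3p p q by simp
  show c0: "a*q \<le> c" using bp c aq by (simp add: algebra_simps)
  have "a*b = r*(b*p) + t*b" "r*(b*p) = r*c + r*(a*q)" unfolding a c by (simp_all add: algebra_simps)
  then show ab: "a*b = r*c + t*b + r*(a*q)" by linarith
  have "r*(2*q) \<le> r*p" using q r by (intro mult_left_mono) auto
  then have "2*(r*q) + 6*q \<le> 2*(a - 1)" using a t q a3p by (simp add: algebra_simps)
  then have "r*q + 3*q \<le> a - 1" by simp
  then have "a*(r*q + 3*q) \<le> a*(a - 1)" using a3p p by (intro mult_left_mono) auto
  also have "\<dots> \<le> a*b" using a3p p b by (intro mult_left_mono) auto
  finally show "3*(a*q) \<le> r*c + t*b" using ab by (simp add: algebra_simps)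
  show "a*c = r*(p*c) + t*c" unfolding a by (simp add: algebra_simps)
  show "c \<le> p*c" using p c0 aq by (simp add: mult_le_cancel_right1)
  show "3*(p*c) \<le> r*(p*c)" using r p c0 aq by (intro mult_right_mono) auto
  show "0 < p*b" "0 < p*a" using p b0 a3p by simp_all
  show "t*(a*q) \<le> t*c" using t c0 by (intro mult_left_mono) auto
  show "p*(a*q) \<le> p*c" using p c0 by (intro mult_left_mono) auto
qed

lemma lattice_points_part_g_large_residue:
  fixes a b p q c r t G s :: int
  assumes a: "a = r*p + t" and t: "1 \<le> t" "t \<le> p" and r: "3 \<le> r" and q: "1 \<le> q" "2*q \<le> p"
    and b: "5*a \<le> 2*b" and c: "c = b*p - q*a"
    and G: "(t - 1)*b + (r + 3)*c \<le> G + a"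
    and s: "3*p \<le> s" "s < a"
  shows "\<exists>T \<subseteq> lattice_points a b p q s (G + a). card T = 4"
proof -
  note ineq = part_g_inequalities[OF a t r q b c]
  define m where "m = s div p"
  define \<rho> where "\<rho> = s mod p"
  have s_eq: "s = m*p + \<rho>" and \<rho>: "0 \<le> \<rho>" "\<rho> < p"
    unfolding m_def \<rho>_def using ineq(1) by simp_all
  have "3 \<le> m"
  proof (rule ccontr)
    assume "\<not> 3 \<le> m"
    then have "m*p \<le> 2*p" using ineq(1) by (intro mult_right_mono) auto
    then show False using s s_eq \<rho> by linarith
  qed
  have "m \<le> r"
  proof (rule ccontr)
    assume "\<not> m \<le> r"
    then have "(r + 1)*p \<le> m*p" using ineq(1) by (intro mult_right_mono) auto
    moreover have "(r + 1)*p = r*p + p" by (simp add: algebra_simps)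
    ultimately show False using s s_eq \<rho> a t by linarith
  qed
  have G': "t*b - b + r*c + 3*c \<le> G + a" using G by (simp add: algebra_simps)
  have "m*c + b*\<rho> + 3*(a*q) \<le> t*b - b + r*c + 3*c"
  proof (cases "m = r")
    case True
    then have "\<rho> \<le> t - 1" using s s_eq a \<rho> by simp
    then have "b*\<rho> \<le> b*(t - 1)" using ineq(3) by (intro mult_left_mono) auto
    then show ?thesis using True ineq(6) by (simp add: algebra_simps)
  next
    case False
    then have "m*c \<le> (r - 1)*c" using \<open>m \<le> r\<close> ineq(5,6) by (intro mult_right_mono) auto
    moreover have "b*\<rho> \<le> b*(p - 1)" using ineq(3) \<rho> by (intro mult_left_mono) auto
    ultimately have "m*c \<le> r*c - c" "b*\<rho> \<le> b*p - b" by (simp_all add: algebra_simps)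
    moreover have "c = b*p - a*q" "0 \<le> t*b" using c t ineq(3) by (simp_all add: algebra_simps)
    ultimately show ?thesis using ineq(4,5) by linarith
  qed
  then have "m*c + b*\<rho> + 3*(a*q) \<le> G + a" using G' by linarith
  moreover have "b*s + a*(0*b - q*(m - w)) \<le> m*c + b*\<rho> + 3*(a*q)" if "w \<le> 3" for w
  proof -
    have "a*(q*w) \<le> a*(q*3)" using that ineq(2,5) q by (intro mult_left_mono) auto
    moreover have "m*c = m*(b*p) - m*(q*a)" unfolding c by (simp add: algebra_simps)
    moreover have "b*s = m*(b*p) + b*\<rho>" by (simp add: s_eq algebra_simps)
    ultimately show ?thesis by (simp only: algebra_simps; linarith)
  qed
  moreover have "p*(m - w) \<le> s" if "0 \<le> w" for w
    using s_eq that \<rho> ineq(1) by (simp add: algebra_simps)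
  ultimately have mem: "(0, m - w) \<in> lattice_points a b p q s (G + a)" if "0 \<le> w" "w \<le> 3" for w
    using that \<open>3 \<le> m\<close> by (intro mem_lattice_pointsI) force+
  show ?thesis
    by (rule card_four_subsetI[of "(0, m - 0)" "(0, m - 1)" "(0, m - 2)" "(0, m - 3)"];
        (rule mem)?) simp_all
qed

lemma lattice_points_part_g_small_residue:
  fixes a b p q c r t G s :: int
  assumes a: "a = r*p + t" and t: "1 \<le> t" "t \<le> p" and r: "3 \<le> r" and q: "1 \<le> q" "2*q \<le> p"
    and b: "5*a \<le> 2*b" and c: "c = b*p - q*a"
    and G: "(p - 1)*b + (r + 2)*c \<le> G + a" "(t - 1)*b + (r + 3)*c \<le> G + a"
    and s: "0 \<le> s" "s < 3*p"
  shows "\<exists>T \<subseteq> lattice_points a b p q s (G + a). card T = 4"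
proof -
  note ineq = part_g_inequalities[OF a t r q b c]
  have V1: "b*s + a*(1*b - q*z) = b*s + r*c + t*b + (r - z)*(a*q)" for z
    using ineq(7) by (simp add: algebra_simps)
  have V0: "b*s + a*(0*b - q*z) \<le> b*s" if "0 \<le> z" for z
  proof -
    have "0 \<le> (a*q)*z" using that ineq(5) by simp
    then show ?thesis by (simp add: algebra_simps)
  qed
  have G': "b*p - b + r*c + 2*c \<le> G + a" "t*b - b + r*c + 3*c \<le> G + a"
    using G by (simp_all add: algebra_simps)
  have "0 \<le> r*c" "0 \<le> t*b" using r t ineq(3,5,6) by simp_all
  note facts = G' ineq(1,4,5,6,8) \<open>0 \<le> r*c\<close> \<open>0 \<le> t*b\<close> c a r t
  have bs: "b*s \<le> b*w" if "s \<le> w" for w using that ineq(3) by (intro mult_left_mono) auto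
  consider "2*p \<le> s" "s + t < 3*p" | "2*p \<le> s" "3*p \<le> s + t"
    | "p \<le> s" "s < 2*p" "s + t < 2*p" | "p \<le> s" "s < 2*p" "2*p \<le> s + t"
    | "s < p" "s + t < p" | "s < p" "p \<le> s + t"
    using s by linarith
  then show ?thesis
  proof cases
    case 1
    have "b*s \<le> b*(3*p - t - 1)" using 1 by (intro bs) simp
    moreover have "(r - (r + 2))*(a*q) = -2*(a*q)" by (simp add: algebra_simps)
    ultimately have local: "b*s \<le> b*(3*p - t - 1)" "(r - (r + 2))*(a*q) = -2*(a*q)" by simp_all
    show ?thesis
      by (rule card_four_subsetI[of "(0,2)" "(0,1)" "(0,0)" "(1::int,r+2::int)"];
          ((rule mem_lattice_pointsI; use s 1 local V1[of "r + 2"] V0 facts in \<open>(simp only: algebra_simps)?; linarith\<close>) | simp))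
  next
    case 2
    have "b*s \<le> b*(3*p - 1)" using s by (intro bs) simp
    moreover have "(r - (r + 3))*(a*q) = -3*(a*q)" by (simp add: algebra_simps)
    ultimately have local: "b*s \<le> b*(3*p - 1)" "(r - (r + 3))*(a*q) = -3*(a*q)" by simp_all
    show ?thesis
      by (rule card_four_subsetI[of "(0,2)" "(0,1)" "(0,0)" "(1::int,r+3::int)"];
          ((rule mem_lattice_pointsI; use s 2 local V1[of "r + 3"] V0 facts in \<open>(simp only: algebra_simps)?; linarith\<close>) | simp))
  next
    case 3
    have "b*s \<le> b*(2*p - t - 1)" using 3 by (intro bs) simp
    moreover have "(r - (r + 1))*(a*q) = -1*(a*q)" "(r - r)*(a*q) = 0" by (simp_all add: algebra_simps)
    ultimately have local: "b*s \<le> b*(2*p - t - 1)" "(r - (r + 1))*(a*q) = -1*(a*q)" "(r - r)*(a*q) = 0"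
      by simp_all
    show ?thesis
      by (rule card_four_subsetI[of "(0,1)" "(0,0)" "(1,r+1)" "(1::int,r::int)"];
          ((rule mem_lattice_pointsI; use s 3 local V1[of "r + 1"] V1[of r] V0 facts in \<open>(simp only: algebra_simps)?; linarith\<close>) | simp))
  next
    case 4
    have "b*s \<le> b*(2*p - 1)" using 4 by (intro bs) simp
    moreover have "(r - (r + 2))*(a*q) = -2*(a*q)" "(r - (r + 1))*(a*q) = -1*(a*q)"
      by (simp_all add: algebra_simps)
    ultimately have local: "b*s \<le> b*(2*p - 1)" "(r - (r + 2))*(a*q) = -2*(a*q)"
      "(r - (r + 1))*(a*q) = -1*(a*q)" by simp_all
    show ?thesis
      by (rule card_four_subsetI[of "(0,1)" "(0,0)" "(1,r+2)" "(1::int,r+1::int)"];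
          ((rule mem_lattice_pointsI; use s 4 local V1[of "r + 2"] V1[of "r + 1"] V0 facts in \<open>(simp only: algebra_simps)?; linarith\<close>) | simp))
  next
    case 5
    have "b*s \<le> b*(p - t - 1)" using 5 by (intro bs) simp
    moreover have "(r - (r - 2))*(a*q) = 2*(a*q)" "(r - (r - 1))*(a*q) = 1*(a*q)" "(r - r)*(a*q) = 0"
      by (simp_all add: algebra_simps)
    ultimately have local: "b*s \<le> b*(p - t - 1)" "(r - (r - 2))*(a*q) = 2*(a*q)"
      "(r - (r - 1))*(a*q) = 1*(a*q)" "(r - r)*(a*q) = 0" by simp_all
    show ?thesis
      by (rule card_four_subsetI[of "(0,0)" "(1,r)" "(1,r-1)" "(1::int,r-2::int)"];
          ((rule mem_lattice_pointsI; use s 5 local V1[of r] V1[of "r - 1"] V1[of "r - 2"] V0 facts in \<open>(simp only: algebra_simps)?; linarith\<close>) | simp))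
  next
    case 6
    have "b*s \<le> b*(p - 1)" using 6 by (intro bs) simp
    moreover have "(r - (r + 1))*(a*q) = -1*(a*q)" "(r - (r - 1))*(a*q) = 1*(a*q)" "(r - r)*(a*q) = 0"
      by (simp_all add: algebra_simps)
    ultimately have local: "b*s \<le> b*(p - 1)" "(r - (r + 1))*(a*q) = -1*(a*q)"
      "(r - (r - 1))*(a*q) = 1*(a*q)" "(r - r)*(a*q) = 0" by simp_all
    show ?thesis
      by (rule card_four_subsetI[of "(0,0)" "(1,r+1)" "(1,r)" "(1::int,r-1::int)"];
          ((rule mem_lattice_pointsI; use s 6 local V1[of "r + 1"] V1[of r] V1[of "r - 1"] V0 facts in \<open>(simp only: algebra_simps)?; linarith\<close>) | simp))
  qed
qed

lemma at_least_four_points_part_g: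
  fixes a b p q c r t G :: int
  assumes a: "a = r*p + t" and t: "1 \<le> t" "t \<le> p" and r: "3 \<le> r" and q: "1 \<le> q" "2*q \<le> p"
    and b: "5*a \<le> 2*b" and c: "c = b*p - q*a"
    and G: "(p - 1)*b + (r + 2)*c \<le> G + a" "(t - 1)*b + (r + 3)*c \<le> G + a"
  shows "at_least_four_points a b p q G"
  unfolding at_least_four_points_def
proof (intro allI impI)
  fix s assume "0 \<le> s" "s < a"
  then show "\<exists>T \<subseteq> lattice_points a b p q s (G + a). card T = 4"
    using lattice_points_part_g_small_residue[OF a t r q b c G] lattice_points_part_g_large_residue[OF a t r q b c G(2)]
    by (cases "s < 3*p") auto
qed

lemma lattice_point_value_bound:
  fixes a b p q c s j z G :: int
  assumes c: "c = b*p - q*a" and "0 \<le> a" "0 \<le> q" "0 \<le> p" "0 \<le> c" "2 \<le> j"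
    and y: "p*z \<le> s + j*a" and V: "b*s + a*(j*b - q*z) \<le> G"
  shows "(s + 2*a)*c \<le> p*G"
proof -
  have "p*(b*s + a*(j*b - q*z)) = (s + j*a)*c + (a*q)*(s + j*a - p*z)"
    unfolding c by (simp add: algebra_simps)
  moreover have "0 \<le> (a*q)*(s + j*a - p*z)" using y assms by simp
  moreover have "p*(b*s + a*(j*b - q*z)) \<le> p*G" using V assms by (intro mult_left_mono)
  moreover have "2*a \<le> j*a" using assms by (intro mult_right_mono) auto
  then have "(s + 2*a)*c \<le> (s + j*a)*c" using assms by (intro mult_right_mono) auto
  ultimately show ?thesis by linarith
qed

lemma at_most_three_points_part_g_first:
  fixes a b p q c r t :: int
  assumes a: "a = r*p + t" and t: "1 \<le> t" "t \<le> p" and r: "3 \<le> r" and q: "1 \<le> q" "2*q \<le> p"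
    and b: "5*a \<le> 2*b" and c: "c = b*p - q*a"
  shows "at_most_three_points a b p q ((t-1)*b + (r+3)*c - a) (3*p - 1)"
proof -
  note ineq = part_g_inequalities[OF assms]
  show ?thesis
  proof (rule at_most_three_pointsI[where u="(0,0)" and v="(0,1)" and w="(0,2)"])
    show "a dvd (t-1)*b + (r+3)*c - a - b * (3*p - 1)"
      by (rule dvdI[of _ _ "b - r*q - 3*q - 1"]) (simp add: c a algebra_simps)
  next
    fix j z assume j: "0 \<le> j" and z: "0 \<le> z" and y: "p*z \<le> (3*p - 1) + j*a"
      and V: "b*(3*p - 1) + a*(j*b - q*z) \<le> (t-1)*b + (r+3)*c - a"
    have z_mono: "p*z \<ge> p*w" if "z \<ge> w" for w using that ineq(1) by (intro mult_left_mono) auto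
    show "(j,z) \<in> {(0,0),(0,1),(0,2)}"
    proof (cases "j = 0")
      case True
      have "z \<le> 2"
      proof (rule ccontr)
        assume "\<not> z \<le> 2"
        then have "p*z \<ge> p*3" using z_mono by simp
        then show False using y True by simp
      qed
      then show ?thesis using True z by auto
    next
      case j0: False
      show ?thesis
      proof (cases "j = 1")
        case True
        have "z \<le> r + 3"
        proof (rule ccontr)
          assume "\<not> z \<le> r + 3"
          then have "p*z \<ge> p*(r+4)" using z_mono by simp
          moreover have "p*(r+4) = r*p + 4*p" by (simp add: algebra_simps)
          ultimately show False using y True a t(2) by simp
        qed
        then have "a*q*z \<le> a*q*(r+3)" using ineq(5) by (intro mult_left_mono) auto
        moreover have "b*(3*p - 1) + a*(j*b - q*z) = b*(3*p-1) + a*b - a*q*z" using True by (simp add: algebra_simps)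
        moreover have "(t-1)*b + (r+3)*c = b*(3*p-1) + a*b - a*q*(r+3)" unfolding c a by (simp add: algebra_simps)
        ultimately have False using V ineq by linarith
        then show ?thesis by simp
      next
        case False
        then have j2: "j \<ge> 2" using j0 j by simp
        have J: "(3*p - 1 + 2*a)*c \<le> p*((t-1)*b + (r+3)*c - a)"
          by (rule lattice_point_value_bound[OF c _ _ _ _ j2 y V]) (use ineq(1,2,5,6) q(1) in linarith)+
        have Ftb: "p*(t*b) = t*c + t*(a*q)" unfolding c by (simp add: algebra_simps)
        have Frc: "r*(p*c) \<ge> c" using ineq by linarith
        have L: "(3*p - 1 + 2*a)*c = 3*(p*c) - c + 2*(a*c)" by (simp add: algebra_simps)
        have R: "p*((t-1)*b + (r+3)*c - a) = p*(t*b) - p*b + r*(p*c) + 3*(p*c) - p*a" by (simp add: algebra_simps)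
        have False using J L R Ftb Frc ineq by linarith
        then show ?thesis by simp
      qed
    qed
  qed (use ineq(1,2) in auto)
qed

lemma at_most_three_points_part_g_second:
  fixes a b p q c r t :: int
  assumes a: "a = r*p + t" and t: "1 \<le> t" "t \<le> p" and r: "3 \<le> r" and q: "1 \<le> q" "2*q \<le> p"
    and b: "5*a \<le> 2*b" and c: "c = b*p - q*a" and small: "t*b < q*a"
  shows "at_most_three_points a b p q ((p-1)*b + (r+2)*c - a) (3*p - t - 1)"
proof -
  note ineq = part_g_inequalities[OF a t r q b c]
  have t_less_p: "t < p"
  proof (rule ccontr)
    assume "\<not> t < p" then have "t = p" using t(2) by simp
    then show False using small ineq(4) ineq(5) by (simp add: algebra_simps)
  qed
  show ?thesis
  proof (rule at_most_three_pointsI[where u="(0,0)" and v="(0,1)" and w="(0,2)"])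
    show "a dvd (p-1)*b + (r+2)*c - a - b * (3*p - t - 1)"
      by (rule dvdI[of _ _ "b - r*q - 2*q - 1"]) (simp add: c a algebra_simps)
  next
    fix j z assume j: "0 \<le> j" and z: "0 \<le> z" and y: "p*z \<le> (3*p - t - 1) + j*a"
      and V: "b*(3*p - t - 1) + a*(j*b - q*z) \<le> (p-1)*b + (r+2)*c - a"
    have z_mono: "p*z \<ge> p*w" if "z \<ge> w" for w using that ineq(1) by (intro mult_left_mono) auto
    show "(j,z) \<in> {(0,0),(0,1),(0,2)}"
    proof (cases "j = 0")
      case True
      have "z \<le> 2"
      proof (rule ccontr)
        assume "\<not> z \<le> 2"
        then have "p*z \<ge> p*3" using z_mono by simp
        then show False using y True t(1) by simp
      qed
      then show ?thesis using True z by auto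
    next
      case j0: False
      show ?thesis
      proof (cases "j = 1")
        case True
        have "z \<le> r + 2"
        proof (rule ccontr)
          assume "\<not> z \<le> r + 2"
          then have "p*z \<ge> p*(r+3)" using z_mono by simp
          moreover have "p*(r+3) = r*p + 3*p" by (simp add: algebra_simps)
          ultimately show False using y True a by simp
        qed
        then have "a*q*z \<le> a*q*(r+2)" using ineq(5) by (intro mult_left_mono) auto
        moreover have "b*(3*p - t - 1) + a*(j*b - q*z) = b*(3*p - t - 1) + a*b - a*q*z" using True by (simp add: algebra_simps)
        moreover have "(p-1)*b + (r+2)*c = b*(3*p - t - 1) + a*b - a*q*(r+2)" unfolding c a by (simp add: algebra_simps)
        ultimately have False using V ineq by linarith
        then show ?thesis by simp
      next
        case False
        then have j2: "j \<ge> 2" using j0 j by simp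
        have J: "(3*p - t - 1 + 2*a)*c \<le> p*((p-1)*b + (r+2)*c - a)"
          by (rule lattice_point_value_bound[OF c _ _ _ _ j2 y V]) (use ineq(1,2,5,6) q(1) in linarith)+
        have Fpc: "p*c = p*(b*p) - p*(a*q)" unfolding c by (simp add: algebra_simps)
        have L: "(3*p - t - 1 + 2*a)*c = 3*(p*c) - t*c - c + 2*(a*c)" by (simp add: algebra_simps)
        have R: "p*((p-1)*b + (r+2)*c - a) = p*(b*p) - p*b + r*(p*c) + 2*(p*c) - p*a" by (simp add: algebra_simps)
        have tc: "t*c \<ge> 0" using t(1) ineq(6) ineq(5) by simp
        have False using J L R Fpc tc ineq by linarith
        then show ?thesis by simp
      qed
    qed
  qed (use ineq(1,2) t_less_p t(1) in auto)
qed


lemma p_frobenius_fib_part_g: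
  assumes "3 \<le> i" "3 \<le> k" and r: "r = (F i - 1) div F k" "3 \<le> r"
  shows "F (k - 2) * F i \<le> (F i - r * F k) * F (i + 2) \<Longrightarrow>
      p_frobenius 3 [fib i, fib (i + 2), fib (i + k)]
        = (F i - r * F k - 1) * F (i + 2) + (r + 3) * F (i + k) - F i"
    and "(F i - r * F k) * F (i + 2) < F (k - 2) * F i \<Longrightarrow>
      p_frobenius 3 [fib i, fib (i + 2), fib (i + k)]
        = (F k - 1) * F (i + 2) + (r + 2) * F (i + k) - F i"
proof -
  note fi = fib_around_index[OF assms(1)] and fk = fib_around_index[OF assms(2)]
  have "0 < F k" using fk by simp
  then have "F i - 1 = r * F k + (F i - 1) mod F k" "0 \<le> (F i - 1) mod F k" "(F i - 1) mod F k < F k"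
    unfolding r by simp_all
  then have t: "1 \<le> F i - r * F k" "F i - r * F k \<le> F k" by linarith+
  have a: "F i = r * F k + (F i - r * F k)" by simp
  have q: "1 \<le> F (k - 2)" "2 * F (k - 2) \<le> F k" using fk by linarith+
  have b: "5 * F i \<le> 2 * F (i + 2)" using fi by linarith
  have c: "F (i + k) = F (i + 2) * F k - F (k - 2) * F i" using fib_add_shift[of k i] assms by simp
  note base = a t r(2) q b c
  show "p_frobenius 3 [fib i, fib (i + 2), fib (i + k)]
      = (F i - r * F k - 1) * F (i + 2) + (r + 3) * F (i + k) - F i"
    if "F (k - 2) * F i \<le> (F i - r * F k) * F (i + 2)"
  proof (rule p_frobenius_fib_eqI[where s = "3 * F k - 1"])
    have "(F k - 1) * F (i + 2) + (r + 2) * F (i + k)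
        \<le> (F i - r * F k - 1) * F (i + 2) + (r + 3) * F (i + k)"
      using that c by (simp add: algebra_simps)
    then show "at_least_four_points (F i) (F (i + 2)) (F k) (F (k - 2))
        ((F i - r * F k - 1) * F (i + 2) + (r + 3) * F (i + k) - F i)"
      by (intro at_least_four_points_part_g[OF base]) simp_all
    show "at_most_three_points (F i) (F (i + 2)) (F k) (F (k - 2))
        ((F i - r * F k - 1) * F (i + 2) + (r + 3) * F (i + k) - F i) (3 * F k - 1)"
      by (rule at_most_three_points_part_g_first[OF base])
  qed (use assms in auto)
  show "p_frobenius 3 [fib i, fib (i + 2), fib (i + k)]
      = (F k - 1) * F (i + 2) + (r + 2) * F (i + k) - F i"
    if "(F i - r * F k) * F (i + 2) < F (k - 2) * F i"
  proof (rule p_frobenius_fib_eqI[where s = "3 * F k - (F i - r * F k) - 1"])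
    have "(F i - r * F k - 1) * F (i + 2) + (r + 3) * F (i + k)
        \<le> (F k - 1) * F (i + 2) + (r + 2) * F (i + k)"
      using that c by (simp add: algebra_simps)
    then show "at_least_four_points (F i) (F (i + 2)) (F k) (F (k - 2))
        ((F k - 1) * F (i + 2) + (r + 2) * F (i + k) - F i)"
      by (intro at_least_four_points_part_g[OF base]) simp_all
    show "at_most_three_points (F i) (F (i + 2)) (F k) (F (k - 2))
        ((F k - 1) * F (i + 2) + (r + 2) * F (i + k) - F i) (3 * F k - (F i - r * F k) - 1)"
      by (rule at_most_three_points_part_g_second[OF base that])
  qed (use assms in auto)
qed

theorem theorem4:
  fixes i k :: nat
  assumes "i \<ge> 3" and "k \<ge> 3"
  shows
   "(k \<ge> i + 3 \<longrightarrow>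
       p_frobenius 3 [fib i, fib (i+2), fib (i+k)] = (4 * F i - 1) * F (i+2) - F i)
    \<and> p_frobenius 3 [fib i, fib (i+2), fib (2*i+2)]
        = (F i - 1) * F (i+2) + F (2*i+2) - F i
    \<and> p_frobenius 3 [fib i, fib (i+2), fib (2*i+1)]
        = (F i + F (i-2) - 1) * F (i+2) + F (2*i+1) - F i
    \<and> p_frobenius 3 [fib i, fib (i+2), fib (2*i)]
        = (F i - 1) * F (i+2) + 2 * F (2*i) - F i
    \<and> (i \<ge> 4 \<longrightarrow> p_frobenius 3 [fib i, fib (i+2), fib (2*i-1)]
        = (F (i-2) - 1) * F (i+2) + 3 * F (2*i-1) - F i)
    \<and> (i \<ge> 6 \<longrightarrow> p_frobenius 3 [fib i, fib (i+2), fib (2*i-2)]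
        = (F (i-5) - 1) * F (i+2) + 5 * F (2*i-2) - F i)
    \<and> p_frobenius 3 [fib 5, fib 7, fib 8] = F 7 + 4 * F 8 - F 5
    \<and> F 7 + 4 * F 8 - F 5 = 92
    \<and> (let r = (F i - 1) div F k in
        r \<ge> 3 \<longrightarrow>
          ((F i - r * F k) * F (i+2) \<ge> F (k-2) * F i \<longrightarrow>
             p_frobenius 3 [fib i, fib (i+2), fib (i+k)]
               = (F i - r * F k - 1) * F (i+2) + (r + 3) * F (i+k) - F i)
          \<and> ((F i - r * F k) * F (i+2) < F (k-2) * F i \<longrightarrow>
             p_frobenius 3 [fib i, fib (i+2), fib (i+k)]
               = (F k - 1) * F (i+2) + (r + 2) * F (i+k) - F i))"
proof -
  have "F 7 + 4 * F 8 - F 5 = 92" by (simp add: numeral_eq_Suc)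
  then show ?thesis
    using assms p_frobenius_fib_part_a p_frobenius_fib_part_b p_frobenius_fib_part_c
      p_frobenius_fib_part_d p_frobenius_fib_part_e p_frobenius_fib_part_f p_frobenius_5_7_8
      p_frobenius_fib_part_g[OF assms refl]
    by (simp add: Let_def)
qed

end
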